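(* Let $S,T,V$ be ordered trees and let $f\colon T\to S$ and $g\colon V\to T$ be rigid surjections. Then $f\circ g\colon V\to S$ is a rigid surjection. Moreover, if $d\colon S\to T$ is the injection of $f$ and $e\colon T\to V$ is the injection of $g$, then $e\circ d$ is the injection of $f\circ g$.
   Context: A tree is a finite, non-empty partially ordered set $(T,\sqsubseteq_T)$ with a smallest element (the root) such that the set of predecessors of each element is linearly ordered; each node counts as its own predecessor and successor. For $v,w\in T$, $v\wedge_T w$ is the $\sqsubseteq_T$-largest common predecessor of $v$ and $w$. A tree is ordered if the set of immediate successors of each node carries a fixed linear order; this induces the lexicographic linear order $\leq_T$ on $T$: $v\leq_T w$ if $v\sqsubseteq_T w$, and for $\sqsubseteq_T$-incomparable $v,w$, $v\leq_T w$ iff the immediate successor of $v\wedge_T w$ below $v$ precedes the one below $w$. A morphism $e\colon S\to T$ of ordered trees satisfies $e(v\wedge_S w)=e(v)\wedge_T e(w)$, is monotone from $\leq_S$ to $\leq_T$, and maps root to root. A function $f\colon T\to S$ is a rigid surjection if there is a morphism $e\colon S\to T$ with $f\circ e={\rm id}_S$ and $e(f(w))\sqsubseteq_T w$ for all $w\in T$; such $e$ is unique and is called the injection of $f$. *)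

theory Defs
  imports Main
begin

text \<open>An ordered tree: a carrier set, the tree order (v below w = v is a predecessor of w),
  and a relation ordering siblings (immediate successors of a common node).\<close>
record 'a otree =
  carrier :: "'a set"
  tle :: "'a \<Rightarrow> 'a \<Rightarrow> bool"
  sib :: "'a \<Rightarrow> 'a \<Rightarrow> bool"

definition is_tree :: "'a otree \<Rightarrow> bool" where
  "is_tree T \<longleftrightarrow>
     finite (carrier T) \<and> carrier T \<noteq> {} \<and>
     (\<forall>x\<in>carrier T. tle T x x) \<and>
     (\<forall>x\<in>carrier T. \<forall>y\<in>carrier T. tle T x y \<and> tle T y x \<longrightarrow> x = y) \<and>
     (\<forall>x\<in>carrier T. \<forall>y\<in>carrier T. \<forall>z\<in>carrier T. tle T x y \<and> tle T y z \<longrightarrow> tle T x z) \<and>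
     (\<exists>r\<in>carrier T. \<forall>v\<in>carrier T. tle T r v) \<and>
     (\<forall>v\<in>carrier T. \<forall>x\<in>carrier T. \<forall>y\<in>carrier T.
        tle T x v \<and> tle T y v \<longrightarrow> tle T x y \<or> tle T y x)"

definition tree_root :: "'a otree \<Rightarrow> 'a" where
  "tree_root T = (THE r. r \<in> carrier T \<and> (\<forall>v\<in>carrier T. tle T r v))"

definition imm_succ :: "'a otree \<Rightarrow> 'a \<Rightarrow> 'a \<Rightarrow> bool" where
  "imm_succ T v w \<longleftrightarrow> v \<in> carrier T \<and> w \<in> carrier T \<and> tle T v w \<and> v \<noteq> w \<and>
     \<not> (\<exists>u\<in>carrier T. tle T v u \<and> tle T u w \<and> u \<noteq> v \<and> u \<noteq> w)"

definition ordered_tree :: "'a otree \<Rightarrow> bool" where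
  "ordered_tree T \<longleftrightarrow> is_tree T \<and>
     (\<forall>v\<in>carrier T. let C = {w. imm_succ T v w} in
        (\<forall>x\<in>C. sib T x x) \<and>
        (\<forall>x\<in>C. \<forall>y\<in>C. sib T x y \<and> sib T y x \<longrightarrow> x = y) \<and>
        (\<forall>x\<in>C. \<forall>y\<in>C. \<forall>z\<in>C. sib T x y \<and> sib T y z \<longrightarrow> sib T x z) \<and>
        (\<forall>x\<in>C. \<forall>y\<in>C. sib T x y \<or> sib T y x))"

definition tmeet :: "'a otree \<Rightarrow> 'a \<Rightarrow> 'a \<Rightarrow> 'a" where
  "tmeet T v w = (THE u. u \<in> carrier T \<and> tle T u v \<and> tle T u w \<and>
      (\<forall>u'\<in>carrier T. tle T u' v \<and> tle T u' w \<longrightarrow> tle T u' u))"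

definition child_towards :: "'a otree \<Rightarrow> 'a \<Rightarrow> 'a \<Rightarrow> 'a" where
  "child_towards T u v = (THE c. imm_succ T u c \<and> tle T c v)"

definition lexle :: "'a otree \<Rightarrow> 'a \<Rightarrow> 'a \<Rightarrow> bool" where
  "lexle T v w \<longleftrightarrow> tle T v w \<or>
     (\<not> tle T v w \<and> \<not> tle T w v \<and>
      sib T (child_towards T (tmeet T v w) v) (child_towards T (tmeet T v w) w))"

definition tree_morphism :: "('a \<Rightarrow> 'b) \<Rightarrow> 'a otree \<Rightarrow> 'b otree \<Rightarrow> bool" where
  "tree_morphism e S T \<longleftrightarrow>
     (\<forall>v\<in>carrier S. e v \<in> carrier T) \<and>
     (\<forall>v\<in>carrier S. \<forall>w\<in>carrier S. e (tmeet S v w) = tmeet T (e v) (e w)) \<and>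
     (\<forall>v\<in>carrier S. \<forall>w\<in>carrier S. lexle S v w \<longrightarrow> lexle T (e v) (e w)) \<and>
     e (tree_root S) = tree_root T"

definition is_injection_of :: "('a \<Rightarrow> 'b) \<Rightarrow> 'a otree \<Rightarrow> 'b otree \<Rightarrow> ('b \<Rightarrow> 'a) \<Rightarrow> bool" where
  "is_injection_of f T S e \<longleftrightarrow> tree_morphism e S T \<and>
     (\<forall>s\<in>carrier S. f (e s) = s) \<and>
     (\<forall>w\<in>carrier T. tle T (e (f w)) w)"

definition rigid_surj :: "('a \<Rightarrow> 'b) \<Rightarrow> 'a otree \<Rightarrow> 'b otree \<Rightarrow> bool" where
  "rigid_surj f T S \<longleftrightarrow> (\<forall>w\<in>carrier T. f w \<in> carrier S) \<and> (\<exists>e. is_injection_of f T S e)"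

end

theory Submission
  imports Defs
begin

text \<open>Rigidity,
  i.e. e (d (f (g w))) \<sqsubseteq> w, follows from d (f (g w)) \<sqsubseteq> g w, which the morphism e
  carries to e (d (f (g w))) \<sqsubseteq> e (g w) \<sqsubseteq> w: morphisms preserve the tree order
  because v \<sqsubseteq> w holds exactly when v \<and> w = v.\<close>

lemma finite_chain_has_greatest:
  assumes "finite C" "C \<noteq> {}"
    and "\<forall>x\<in>C. \<forall>y\<in>C. R x y \<or> R y x"
    and "\<forall>x\<in>C. \<forall>y\<in>C. \<forall>z\<in>C. R x y \<and> R y z \<longrightarrow> R x z"
  shows "\<exists>m\<in>C. \<forall>u\<in>C. R u m"
  using assms
proof (induction C rule: finite_ne_induct)
  case (singleton x)
  then show ?case by blast
next
  case (insert x F)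
  have "\<forall>a\<in>F. \<forall>b\<in>F. R a b \<or> R b a"
    and "\<forall>a\<in>F. \<forall>b\<in>F. \<forall>c\<in>F. R a b \<and> R b c \<longrightarrow> R a c"
    using insert.prems by blast+
  then obtain m where m: "m \<in> F" "\<forall>u\<in>F. R u m" using insert.IH by blast
  show ?case
  proof (cases "R x m")
    case True
    then show ?thesis using m by blast
  next
    case False
    then have "R m x" using insert.prems(1) m(1) by blast
    then have "\<forall>u\<in>insert x F. R u x" using insert.prems m by blast
    then show ?thesis by blast
  qed
qed

lemma tree_refl: "is_tree T \<Longrightarrow> x \<in> carrier T \<Longrightarrow> tle T x x"
  unfolding is_tree_def by blast

lemma tree_antisym:
  "is_tree T \<Longrightarrow> x \<in> carrier T \<Longrightarrow> y \<in> carrier T \<Longrightarrow> tle T x y \<Longrightarrow> tle T y x \<Longrightarrow> x = y"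
  unfolding is_tree_def by blast

lemma tree_trans:
  "is_tree T \<Longrightarrow> x \<in> carrier T \<Longrightarrow> y \<in> carrier T \<Longrightarrow> z \<in> carrier T \<Longrightarrow>
    tle T x y \<Longrightarrow> tle T y z \<Longrightarrow> tle T x z"
  unfolding is_tree_def by blast

lemma tree_predecessors_linear:
  "is_tree T \<Longrightarrow> v \<in> carrier T \<Longrightarrow> x \<in> carrier T \<Longrightarrow> y \<in> carrier T \<Longrightarrow>
    tle T x v \<Longrightarrow> tle T y v \<Longrightarrow> tle T x y \<or> tle T y x"
  unfolding is_tree_def by blast

lemma tree_has_root: "is_tree T \<Longrightarrow> \<exists>r\<in>carrier T. \<forall>v\<in>carrier T. tle T r v"
  unfolding is_tree_def by (elim conjE)

lemma tmeet_greatest_lower_bound: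
  assumes T: "is_tree T" and x: "x \<in> carrier T" and y: "y \<in> carrier T"
  shows tmeet_in_carrier: "tmeet T x y \<in> carrier T"
    and tmeet_tle_left: "tle T (tmeet T x y) x"
    and tmeet_tle_right: "tle T (tmeet T x y) y"
    and tmeet_greatest: "\<And>u. u \<in> carrier T \<Longrightarrow> tle T u x \<Longrightarrow> tle T u y \<Longrightarrow> tle T u (tmeet T x y)"
proof -
  let ?C = "{u\<in>carrier T. tle T u x \<and> tle T u y}"
  obtain r where "r \<in> carrier T" "\<forall>v\<in>carrier T. tle T r v"
    using tree_has_root[OF T] by blast
  then have "?C \<noteq> {}" using x y by blast
  moreover have "finite ?C" using T unfolding is_tree_def by simp
  moreover have "\<forall>a\<in>?C. \<forall>b\<in>?C. tle T a b \<or> tle T b a"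
    using tree_predecessors_linear[OF T x] by blast
  moreover have "\<forall>a\<in>?C. \<forall>b\<in>?C. \<forall>c\<in>?C. tle T a b \<and> tle T b c \<longrightarrow> tle T a c"
    using tree_trans[OF T] by blast
  ultimately obtain m where m: "m \<in> ?C" "\<forall>u\<in>?C. tle T u m"
    using finite_chain_has_greatest[of ?C "tle T"] by blast
  then have glb: "m \<in> carrier T \<and> tle T m x \<and> tle T m y \<and>
      (\<forall>u\<in>carrier T. tle T u x \<and> tle T u y \<longrightarrow> tle T u m)"
    by blast
  have "tmeet T x y = m"
    unfolding tmeet_def
  proof (rule the_equality)
    fix u
    assume "u \<in> carrier T \<and> tle T u x \<and> tle T u y \<and>
      (\<forall>u'\<in>carrier T. tle T u' x \<and> tle T u' y \<longrightarrow> tle T u' u)"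
    then show "u = m" using glb tree_antisym[OF T] by blast
  qed (rule glb)
  then show "tmeet T x y \<in> carrier T" "tle T (tmeet T x y) x" "tle T (tmeet T x y) y"
    "\<And>u. u \<in> carrier T \<Longrightarrow> tle T u x \<Longrightarrow> tle T u y \<Longrightarrow> tle T u (tmeet T x y)"
    using glb by auto
qed

lemma tle_iff_tmeet_eq:
  assumes T: "is_tree T" and x: "x \<in> carrier T" and y: "y \<in> carrier T"
  shows "tle T x y \<longleftrightarrow> tmeet T x y = x"
proof
  assume "tle T x y"
  then have "tle T x (tmeet T x y)" by (rule tmeet_greatest[OF T x y x tree_refl[OF T x]])
  then show "tmeet T x y = x"
    using tree_antisym[OF T tmeet_in_carrier[OF T x y] x tmeet_tle_left[OF T x y]] by simp
next
  assume "tmeet T x y = x"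
  then show "tle T x y" using tmeet_tle_right[OF T x y] by simp
qed

lemma tree_morphism_tle:
  assumes S: "is_tree S" and T: "is_tree T" and e: "tree_morphism e S T"
    and a: "a \<in> carrier S" and b: "b \<in> carrier S" and ab: "tle S a b"
  shows "tle T (e a) (e b)"
proof -
  have ea: "e a \<in> carrier T" and eb: "e b \<in> carrier T"
    using e a b unfolding tree_morphism_def by auto
  have "tmeet T (e a) (e b) = e (tmeet S a b)"
    using e a b unfolding tree_morphism_def by simp
  also have "\<dots> = e a" using ab tle_iff_tmeet_eq[OF S a b] by simp
  finally show ?thesis using tle_iff_tmeet_eq[OF T ea eb] by simp
qed

lemma tree_morphism_comp:
  "tree_morphism d S T \<Longrightarrow> tree_morphism e T V \<Longrightarrow> tree_morphism (e \<circ> d) S V"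
  unfolding tree_morphism_def by auto

lemma is_injection_of_comp:
  assumes T: "is_tree T" and V: "is_tree V"
    and f: "\<forall>w\<in>carrier T. f w \<in> carrier S" and g: "\<forall>w\<in>carrier V. g w \<in> carrier T"
    and d: "is_injection_of f T S d" and e: "is_injection_of g V T e"
  shows "is_injection_of (f \<circ> g) V S (e \<circ> d)"
proof -
  have md: "tree_morphism d S T" and me: "tree_morphism e T V"
    using d e unfolding is_injection_of_def by auto
  have "f (g (e (d s))) = s" if s: "s \<in> carrier S" for s
  proof -
    have "d s \<in> carrier T" using md s unfolding tree_morphism_def by blast
    then show ?thesis using d e s unfolding is_injection_of_def by simp
  qed
  moreover have "tle V (e (d (f (g w)))) w" if w: "w \<in> carrier V" for w
  proof -
    have gw: "g w \<in> carrier T" using g w by blast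
    then have dfgw: "d (f (g w)) \<in> carrier T" using f md unfolding tree_morphism_def by blast
    have "tle T (d (f (g w))) (g w)" using d gw unfolding is_injection_of_def by blast
    then have "tle V (e (d (f (g w)))) (e (g w))"
      using tree_morphism_tle[OF T V me dfgw gw] by blast
    moreover have "tle V (e (g w)) w" using e w unfolding is_injection_of_def by blast
    moreover have "e (d (f (g w))) \<in> carrier V" "e (g w) \<in> carrier V"
      using me dfgw gw unfolding tree_morphism_def by auto
    ultimately show ?thesis using tree_trans[OF V _ _ w] by blast
  qed
  ultimately show ?thesis
    using tree_morphism_comp[OF md me] unfolding is_injection_of_def by simp
qed

theorem lemma2p2:
  fixes S :: "'s otree" and T :: "'t otree" and V :: "'v otree"
    and f :: "'t \<Rightarrow> 's" and g :: "'v \<Rightarrow> 't"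
  assumes "ordered_tree S" and "ordered_tree T" and "ordered_tree V"
    and "rigid_surj f T S" and "rigid_surj g V T"
  shows "rigid_surj (f \<circ> g) V S \<and>
    (\<forall>d e. is_injection_of f T S d \<and> is_injection_of g V T e
       \<longrightarrow> is_injection_of (f \<circ> g) V S (e \<circ> d))"
proof -
  have T: "is_tree T" and V: "is_tree V" using assms(2,3) unfolding ordered_tree_def by auto
  have f: "\<forall>w\<in>carrier T. f w \<in> carrier S" and g: "\<forall>w\<in>carrier V. g w \<in> carrier T"
    using assms(4,5) unfolding rigid_surj_def by auto
  have comp: "\<forall>d e. is_injection_of f T S d \<and> is_injection_of g V T e
       \<longrightarrow> is_injection_of (f \<circ> g) V S (e \<circ> d)"
    using is_injection_of_comp[OF T V f g] by blast
  moreover obtain d e where "is_injection_of f T S d" "is_injection_of g V T e"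
    using assms(4,5) unfolding rigid_surj_def by blast
  ultimately show ?thesis using f g unfolding rigid_surj_def by auto
qed

end
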